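(* Let $T$ be a symmetric network (so $T_{ij}=T_{ji}$ for all $i,j$) with $T_{ii}\ge \tfrac12$ for all $i\in N$, let the initial beliefs $x_0\in[0,1]^n$ be fixed, and fix $\epsilon>0$. For $q\in[0,1]$ let $T^*(q)$ be the network induced by confirmation bias $q$. Then the average convergence time $\tau$ of $T^*(q)$ is weakly monotonically increasing in $q$.
   Context: Agents $N=\{1,\dots,n\}$ communicate through a network $T$, an $n\times n$ row-stochastic matrix with entries $T_{ij}\in[0,1]$ ($T_{ij}$ is the weight agent $i$ places on agent $j$'s view; $T_{ii}$ is the self-link). $T$ is assumed strongly connected and aperiodic. Each agent $i$ has an initial belief $x_{i0}\in[0,1]$. Confirmation bias of strength $q\in[0,1]$ produces a network $T^*$ as follows: for $j\neq i$, if $|x_{i0}-x_{j0}|>1-q$ then $T^*_{ij}=0$ and the weight $T_{ij}$ is added to $i$'s self-link; otherwise $T^*_{ij}=T_{ij}$; thus $T^*_{ii}=T_{ii}+\sum_{j\ne i:\,|x_{i0}-x_{j0}|>1-q}T_{ij}$. $T^*$ is assumed strongly connected. Beliefs evolve by $x_t=T^*x_{t-1}$. For a network $P$ with stationary distribution (influence vector) $s$, i.e. the left eigenvector with $sP=s$, $\sum_i s_i=1$, the average convergence time is $\tau=\min\{t>0:\frac1n\sum_i\|P^t(i,\cdot)-s\|_2^2<\epsilon\}$, where $P^t(i,\cdot)$ is the $i$-th row of $P^t$ and $\|\cdot\|_2$ the Euclidean norm. *)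

theory Defs
  imports Complex_Main
begin

text \<open>Agents are indexed by {..<n}; a network is an n x n real matrix given as
  a function nat => nat => real (only entries with indices < n matter).\<close>

definition mat_mult :: "nat \<Rightarrow> (nat \<Rightarrow> nat \<Rightarrow> real) \<Rightarrow> (nat \<Rightarrow> nat \<Rightarrow> real) \<Rightarrow> nat \<Rightarrow> nat \<Rightarrow> real" where
  "mat_mult n A B = (\<lambda>i j. \<Sum>k<n. A i k * B k j)"

fun mat_pow :: "nat \<Rightarrow> (nat \<Rightarrow> nat \<Rightarrow> real) \<Rightarrow> nat \<Rightarrow> nat \<Rightarrow> nat \<Rightarrow> real" where
  "mat_pow n P 0 = (\<lambda>i j. if i = j then 1 else 0)"
| "mat_pow n P (Suc t) = mat_mult n (mat_pow n P t) P"

definition row_stochastic :: "nat \<Rightarrow> (nat \<Rightarrow> nat \<Rightarrow> real) \<Rightarrow> bool" where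
  "row_stochastic n P \<longleftrightarrow>
     (\<forall>i<n. \<forall>j<n. 0 \<le> P i j \<and> P i j \<le> 1) \<and> (\<forall>i<n. (\<Sum>j<n. P i j) = 1)"

definition symmetric_net :: "nat \<Rightarrow> (nat \<Rightarrow> nat \<Rightarrow> real) \<Rightarrow> bool" where
  "symmetric_net n P \<longleftrightarrow> (\<forall>i<n. \<forall>j<n. P i j = P j i)"

definition net_edges :: "nat \<Rightarrow> (nat \<Rightarrow> nat \<Rightarrow> real) \<Rightarrow> (nat \<times> nat) set" where
  "net_edges n P = {(i, j). i < n \<and> j < n \<and> 0 < P i j}"

definition strongly_connected :: "nat \<Rightarrow> (nat \<Rightarrow> nat \<Rightarrow> real) \<Rightarrow> bool" where
  "strongly_connected n P \<longleftrightarrow> (\<forall>i<n. \<forall>j<n. (i, j) \<in> (net_edges n P)\<^sup>+)"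

definition aperiodic :: "nat \<Rightarrow> (nat \<Rightarrow> nat \<Rightarrow> real) \<Rightarrow> bool" where
  "aperiodic n P \<longleftrightarrow> (\<forall>i<n. Gcd {k. 0 < k \<and> 0 < mat_pow n P k i i} = 1)"

definition Tstar :: "nat \<Rightarrow> (nat \<Rightarrow> nat \<Rightarrow> real) \<Rightarrow> (nat \<Rightarrow> real) \<Rightarrow> real \<Rightarrow> nat \<Rightarrow> nat \<Rightarrow> real" where
  "Tstar n T x q = (\<lambda>i j.
     if i = j then T i i + (\<Sum>k\<in>{k. k < n \<and> k \<noteq> i \<and> \<bar>x i - x k\<bar> > 1 - q}. T i k)
     else if \<bar>x i - x j\<bar> > 1 - q then 0 else T i j)"

text \<open>Stationary distribution (influence vector): s P = s, entries summing to 1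
  (normalised to 0 outside the index range so that it is a unique object).\<close>
definition is_stationary :: "nat \<Rightarrow> (nat \<Rightarrow> nat \<Rightarrow> real) \<Rightarrow> (nat \<Rightarrow> real) \<Rightarrow> bool" where
  "is_stationary n P s \<longleftrightarrow>
     (\<forall>j<n. (\<Sum>i<n. s i * P i j) = s j) \<and> (\<Sum>i<n. s i) = 1 \<and> (\<forall>i\<ge>n. s i = 0)"

definition influence :: "nat \<Rightarrow> (nat \<Rightarrow> nat \<Rightarrow> real) \<Rightarrow> nat \<Rightarrow> real" where
  "influence n P = (THE s. is_stationary n P s)"

definition conv_time :: "nat \<Rightarrow> (nat \<Rightarrow> nat \<Rightarrow> real) \<Rightarrow> real \<Rightarrow> nat" where
  "conv_time n P eps = (LEAST t. 0 < t \<and>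
     (1 / real n) * (\<Sum>i<n. (\<Sum>j<n. (mat_pow n P t i j - influence n P j)\<^sup>2)) < eps)"

end

theory Submission
  imports Defs "HOL-Analysis.Convex"
begin

text \<open>
  Confirmation bias keeps the network symmetric with holding weight at least 1/2, and raising
  q only moves off-diagonal weight onto the diagonal. A symmetric, strongly connected stochastic
  matrix P with positive diagonal has the uniform influence vector, so the convergence criterion
  reads (|P^t|^2 - 1)/n < eps for the Frobenius norm |.|; it therefore suffices that |P^t|^2
  does not decrease when off-diagonal weight is moved to the diagonal.

  Along the segment C(s) = A + s D with D = B - A one has d/ds |C(s)^t|^2 = 2t <D, C(s)^(2t-1)>.
  D is a graph Laplacian (symmetric, zero row sums, nonpositive off the diagonal), so the pairing
  is a nonnegative combination of the terms X_kk + X_ll - 2 X_kl of X = C(s)^(2t-1). These are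
  nonnegative because X is positive semidefinite: C(s) is diagonally dominant, thanks to its
  holding weight of at least 1/2, and odd and even powers of a symmetric positive semidefinite
  matrix stay positive semidefinite.
\<close>

section \<open>Powers of stochastic matrices\<close>

lemma mat_mult_assoc: "mat_mult n (mat_mult n A B) C = mat_mult n A (mat_mult n B C)"
  unfolding mat_mult_def
  by (auto simp: sum_distrib_left sum_distrib_right mult.assoc intro!: ext sum.swap)

lemma mat_mult_cong:
  "(\<And>k. k < n \<Longrightarrow> A i k = A' i k \<and> B k j = B' k j) \<Longrightarrow>
   mat_mult n A B i j = mat_mult n A' B' i j"
  unfolding mat_mult_def by simp

lemma mat_mult_id_left: "i < n \<Longrightarrow> mat_mult n (\<lambda>a b. if a = b then 1 else 0) A i j = A i j"
  unfolding mat_mult_def by (simp add: if_distrib[of "\<lambda>c. c * _"] cong: if_cong)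

lemma mat_mult_id_right: "j < n \<Longrightarrow> mat_mult n A (\<lambda>a b. if a = b then 1 else 0) i j = A i j"
  unfolding mat_mult_def by (simp add: if_distrib[of "\<lambda>c. _ * c"] cong: if_cong)

lemma mat_pow_1: "i < n \<Longrightarrow> mat_pow n P 1 i j = P i j"
  by (simp add: mat_mult_id_left)

lemma mat_pow_add:
  "i < n \<Longrightarrow> j < n \<Longrightarrow>
   mat_pow n P (a + b) i j = mat_mult n (mat_pow n P a) (mat_pow n P b) i j"
proof (induction b arbitrary: j)
  case 0
  then show ?case by (simp add: mat_mult_id_right)
next
  case (Suc b)
  have "mat_pow n P (a + Suc b) i j
      = mat_mult n (mat_mult n (mat_pow n P a) (mat_pow n P b)) P i j"
    using Suc by (auto intro: mat_mult_cong)
  then show ?case by (simp add: mat_mult_assoc)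
qed

lemma mat_pow_Suc_left:
  assumes "i < n" "j < n"
  shows "mat_pow n P (Suc t) i j = mat_mult n P (mat_pow n P t) i j"
proof -
  have "mat_pow n P (Suc t) i j = mat_mult n (mat_pow n P 1) (mat_pow n P t) i j"
    using mat_pow_add[OF assms, of P 1 t] by simp
  also have "\<dots> = mat_mult n P (mat_pow n P t) i j"
    by (rule mat_mult_cong) (simp add: mat_mult_id_left assms)
  finally show ?thesis .
qed

lemma symmetric_net_mat_pow:
  assumes "symmetric_net n P"
  shows "symmetric_net n (mat_pow n P t)"
  unfolding symmetric_net_def
proof (induction t)
  case (Suc t)
  show ?case
  proof (intro allI impI)
    fix i j assume ij: "i < n" "j < n"
    have "mat_pow n P (Suc t) i j = mat_mult n P (mat_pow n P t) j i"
      unfolding mat_pow.simps mat_mult_def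
      using Suc assms ij by (intro sum.cong) (auto simp: symmetric_net_def mult.commute)
    then show "mat_pow n P (Suc t) i j = mat_pow n P (Suc t) j i"
      using mat_pow_Suc_left ij by metis
  qed
qed simp

lemma row_stochastic_intro:
  assumes "\<And>i j. i < n \<Longrightarrow> j < n \<Longrightarrow> 0 \<le> P i j" "\<And>i. i < n \<Longrightarrow> (\<Sum>j<n. P i j) = 1"
  shows "row_stochastic n P"
proof -
  have "P i j \<le> 1" if "i < n" "j < n" for i j
    using member_le_sum[of j "{..<n}" "P i"] assms that by simp
  then show ?thesis
    using assms by (simp add: row_stochastic_def)
qed

lemma row_stochastic_mat_pow:
  assumes P: "row_stochastic n P"
  shows "row_stochastic n (mat_pow n P t)"
proof (induction t)
  case 0
  show ?case by (simp add: row_stochastic_def)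
next
  case (Suc t)
  have nonneg: "0 \<le> mat_pow n P (Suc t) i j" if "i < n" "j < n" for i j
    using Suc P that by (auto simp: row_stochastic_def mat_mult_def intro!: sum_nonneg)
  have sum: "(\<Sum>j<n. mat_pow n P (Suc t) i j) = 1" if "i < n" for i
  proof -
    have "(\<Sum>j<n. mat_pow n P (Suc t) i j) = (\<Sum>k<n. mat_pow n P t i k * (\<Sum>j<n. P k j))"
      by (simp add: mat_mult_def sum_distrib_left) (rule sum.swap)
    then show ?thesis
      using Suc P that by (simp add: row_stochastic_def)
  qed
  show ?case
    using nonneg sum by (rule row_stochastic_intro)
qed

lemma column_sum_mat_pow:
  assumes "row_stochastic n P" "symmetric_net n P" "j < n"
  shows "(\<Sum>i<n. mat_pow n P t i j) = 1"
proof -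
  have "(\<Sum>i<n. mat_pow n P t i j) = (\<Sum>i<n. mat_pow n P t j i)"
    using symmetric_net_mat_pow[OF assms(2), of t] assms(3)
    by (intro sum.cong) (auto simp: symmetric_net_def)
  then show ?thesis
    using row_stochastic_mat_pow[OF assms(1), of t] assms(3) by (simp add: row_stochastic_def)
qed

section \<open>Positive semidefiniteness of lazy symmetric walks\<close>

definition mat_inner :: "nat \<Rightarrow> (nat \<Rightarrow> nat \<Rightarrow> real) \<Rightarrow> (nat \<Rightarrow> nat \<Rightarrow> real) \<Rightarrow> real" where
  "mat_inner n X Y = (\<Sum>i<n. \<Sum>j<n. X i j * Y i j)"

lemma mat_inner_commute: "mat_inner n X Y = mat_inner n Y X"
  by (simp add: mat_inner_def mult.commute)

lemma mat_inner_cong: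
  "(\<And>i j. i < n \<Longrightarrow> j < n \<Longrightarrow> X i j = X' i j \<and> Y i j = Y' i j) \<Longrightarrow>
   mat_inner n X Y = mat_inner n X' Y'"
  unfolding mat_inner_def by (intro sum.cong) auto

lemma mat_inner_mult_right:
  assumes "symmetric_net n M"
  shows "mat_inner n X (mat_mult n Y M) = mat_inner n (mat_mult n X M) Y"
proof -
  have "mat_inner n X (mat_mult n Y M) = (\<Sum>i<n. \<Sum>j<n. \<Sum>k<n. X i j * M j k * Y i k)"
    using assms unfolding mat_inner_def mat_mult_def symmetric_net_def
    by (auto simp: sum_distrib_left mult_ac intro!: sum.cong)
  also have "\<dots> = mat_inner n (mat_mult n X M) Y"
    unfolding mat_inner_def mat_mult_def
    by (auto simp: sum_distrib_right intro!: sum.cong sum.swap)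
  finally show ?thesis .
qed

lemma mat_inner_mult_left:
  assumes "symmetric_net n M"
  shows "mat_inner n X (mat_mult n M Y) = mat_inner n (mat_mult n M X) Y"
proof -
  have "mat_inner n X (mat_mult n M Y) = (\<Sum>i<n. \<Sum>j<n. \<Sum>k<n. M k i * X i j * Y k j)"
    using assms unfolding mat_inner_def mat_mult_def symmetric_net_def
    by (auto simp: sum_distrib_left mult_ac intro!: sum.cong)
  also have "\<dots> = (\<Sum>j<n. \<Sum>i<n. \<Sum>k<n. M k i * X i j * Y k j)"
    by (rule sum.swap)
  also have "\<dots> = (\<Sum>j<n. \<Sum>k<n. \<Sum>i<n. M k i * X i j * Y k j)"
    by (intro sum.cong refl sum.swap)
  also have "\<dots> = mat_inner n (mat_mult n M X) Y"
    unfolding mat_inner_def mat_mult_def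
    by (subst sum.swap) (simp add: sum_distrib_right)
  finally show ?thesis .
qed

definition quad_form :: "nat \<Rightarrow> (nat \<Rightarrow> nat \<Rightarrow> real) \<Rightarrow> (nat \<Rightarrow> real) \<Rightarrow> real" where
  "quad_form n X z = (\<Sum>p<n. \<Sum>q<n. z p * X p q * z q)"

lemma quad_form_cong:
  "(\<And>p q. p < n \<Longrightarrow> q < n \<Longrightarrow> X p q = X' p q) \<Longrightarrow> quad_form n X z = quad_form n X' z"
  unfolding quad_form_def by (intro sum.cong) auto

lemma quad_form_eq_mat_inner: "quad_form n X z = mat_inner n X (\<lambda>p q. z p * z q)"
  unfolding quad_form_def mat_inner_def by (simp add: mult_ac)

text \<open>
  With row sums R, sum_(p,q) M_pq (z_p + z_q)^2 = 2 sum_p R_p z_p^2 + 2 z^T M z, and dropping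
  the off-diagonal terms bounds the left-hand side below by 4 sum_p M_pp z_p^2.
\<close>
lemma quad_form_diag_dominant_nonneg:
  assumes sym: "symmetric_net n M" and nonneg: "\<forall>p<n. \<forall>q<n. 0 \<le> M p q"
    and dom: "\<forall>p<n. (\<Sum>q<n. M p q) \<le> 2 * M p p"
  shows "0 \<le> quad_form n M z"
proof -
  define R where "R p = (\<Sum>q<n. M p q)" for p
  have col: "(\<Sum>p<n. M p q) = R q" if "q < n" for q
    unfolding R_def using sym that by (intro sum.cong) (auto simp: symmetric_net_def)
  have "(\<Sum>p<n. \<Sum>q<n. M p q * (z p + z q)\<^sup>2)
      = (\<Sum>p<n. R p * (z p)\<^sup>2) + (\<Sum>q<n. R q * (z q)\<^sup>2) + 2 * quad_form n M z"
  proof -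
    have "(\<Sum>p<n. \<Sum>q<n. M p q * (z q)\<^sup>2) = (\<Sum>q<n. R q * (z q)\<^sup>2)"
      by (subst sum.swap) (simp add: col sum_distrib_right[symmetric])
    then show ?thesis
      unfolding quad_form_def R_def
      by (simp add: power2_sum algebra_simps sum.distrib sum_distrib_left sum_distrib_right)
  qed
  moreover have "(\<Sum>p<n. 4 * M p p * (z p)\<^sup>2) \<le> (\<Sum>p<n. \<Sum>q<n. M p q * (z p + z q)\<^sup>2)"
  proof (intro sum_mono)
    fix p assume "p \<in> {..<n}"
    then have "M p p * (z p + z p)\<^sup>2 \<le> (\<Sum>q<n. M p q * (z p + z q)\<^sup>2)"
      using nonneg by (intro member_le_sum[where f = "\<lambda>q. M p q * (z p + z q)\<^sup>2"]) auto
    then show "4 * M p p * (z p)\<^sup>2 \<le> (\<Sum>q<n. M p q * (z p + z q)\<^sup>2)"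
      by (simp add: power2_eq_square algebra_simps)
  qed
  moreover have "(\<Sum>p<n. 2 * R p * (z p)\<^sup>2) \<le> (\<Sum>p<n. 4 * M p p * (z p)\<^sup>2)"
    using dom by (intro sum_mono mult_right_mono) (auto simp: R_def)
  ultimately show ?thesis
    by (simp add: sum_distrib_left mult.assoc)
qed

lemma quad_form_congruence:
  assumes "symmetric_net n N"
  shows "quad_form n (mat_mult n (mat_mult n N X) N) z = quad_form n X (\<lambda>k. \<Sum>p<n. z p * N p k)"
proof -
  define y where "y k = (\<Sum>p<n. z p * N p k)" for k
  have "quad_form n (mat_mult n (mat_mult n N X) N) z
      = mat_inner n (mat_mult n X N) (mat_mult n N (\<lambda>p q. z p * z q))"
    unfolding quad_form_eq_mat_inner mat_mult_assoc
    using mat_inner_mult_left[OF assms] mat_inner_commute by metis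
  also have "\<dots> = mat_inner n X (mat_mult n (mat_mult n N (\<lambda>p q. z p * z q)) N)"
    using mat_inner_mult_right[OF assms] mat_inner_commute by metis
  also have "\<dots> = mat_inner n X (\<lambda>k l. y k * y l)"
  proof (rule mat_inner_cong)
    fix k l assume "k < n" "l < n"
    then show "X k l = X k l \<and> mat_mult n (mat_mult n N (\<lambda>p q. z p * z q)) N k l = y k * y l"
      using assms unfolding y_def mat_mult_def symmetric_net_def
      by (auto simp: sum_distrib_left sum_distrib_right mult_ac intro!: sum.cong)
  qed
  finally show ?thesis
    by (simp add: quad_form_eq_mat_inner y_def)
qed

lemma quad_form_mat_pow_nonneg:
  assumes sym: "symmetric_net n M" and psd: "\<And>z. 0 \<le> quad_form n M z"
  shows "0 \<le> quad_form n (mat_pow n M r) z"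
proof -
  define u where "u = r div 2"
  define v where "v = r mod 2"
  define y where "y k = (\<Sum>p<n. z p * mat_pow n M u p k)" for k
  have "quad_form n (mat_pow n M r) z
      = quad_form n (mat_mult n (mat_mult n (mat_pow n M u) (mat_pow n M v)) (mat_pow n M u)) z"
  proof (rule quad_form_cong)
    fix p q assume pq: "p < n" "q < n"
    have "r = u + v + u" unfolding u_def v_def by presburger
    then show "mat_pow n M r p q
        = mat_mult n (mat_mult n (mat_pow n M u) (mat_pow n M v)) (mat_pow n M u) p q"
      using pq by (auto simp: mat_pow_add intro!: mat_mult_cong)
  qed
  also have "\<dots> = quad_form n (mat_pow n M v) y"
    unfolding y_def by (rule quad_form_congruence[OF symmetric_net_mat_pow[OF sym]])
  also have "0 \<le> \<dots>"
  proof (cases "v = 0")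
    case True
    then show ?thesis
      by (simp add: quad_form_def if_distrib[of "\<lambda>c. _ * c * _"] sum_nonneg cong: if_cong)
  next
    case False
    then have "v = 1" by (simp add: v_def)
    then show ?thesis
      using psd[of y] quad_form_cong[of n "mat_pow n M 1" M y] mat_pow_1[of _ n M] by simp
  qed
  finally show ?thesis .
qed

lemma quad_form_nonneg_entry_bound:
  assumes sym: "symmetric_net n X" and psd: "\<And>z. 0 \<le> quad_form n X z" and kl: "k < n" "l < n"
  shows "2 * X k l \<le> X k k + X l l"
proof (cases "k = l")
  case False
  define z :: "nat \<Rightarrow> real" where "z p = of_bool (p = k) - of_bool (p = l)" for p
  have "(\<Sum>q<n. z p * X p q * z q) = z p * (X p k - X p l)" for p
    using kl by (simp add: z_def right_diff_distrib sum_subtractf mult.assoc[symmetric]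
        if_distrib cong: if_cong)
  then have "quad_form n X z = X k k - X k l - X l k + X l l"
    using kl False unfolding quad_form_def
    by (simp add: z_def left_diff_distrib sum_subtractf if_distrib cong: if_cong)
  then show ?thesis
    using psd[of z] sym kl by (simp add: symmetric_net_def)
qed simp

text \<open>
  Zero row sums and symmetry give <D, X> = -1/2 sum_(k,l) D_kl (X_kk + X_ll - 2 X_kl).
\<close>
lemma mat_inner_laplacian_nonneg:
  assumes sym: "symmetric_net n D" and rows: "\<forall>k<n. (\<Sum>l<n. D k l) = 0"
    and off_diag: "\<forall>k<n. \<forall>l<n. k \<noteq> l \<longrightarrow> D k l \<le> 0"
    and X: "\<forall>k<n. \<forall>l<n. 2 * X k l \<le> X k k + X l l"
  shows "0 \<le> mat_inner n D X"
proof -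
  have diag_left: "(\<Sum>k<n. \<Sum>l<n. D k l * X k k) = 0"
    using rows by (simp add: sum_distrib_right[symmetric])
  have "(\<Sum>k<n. \<Sum>l<n. D k l * X l l) = (\<Sum>l<n. (\<Sum>k<n. D l k) * X l l)"
    using sym by (subst sum.swap) (auto simp: sum_distrib_right symmetric_net_def intro!: sum.cong)
  then have diag_right: "(\<Sum>k<n. \<Sum>l<n. D k l * X l l) = 0"
    using rows by simp
  have "(\<Sum>k<n. \<Sum>l<n. D k l * (X k k + X l l - 2 * X k l)) \<le> 0"
  proof (intro sum_nonpos)
    fix k l assume "k \<in> {..<n}" "l \<in> {..<n}"
    then show "D k l * (X k k + X l l - 2 * X k l) \<le> 0"
      using off_diag X by (cases "k = l") (auto simp: mult_nonpos_nonneg)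
  qed
  moreover have "(\<Sum>k<n. \<Sum>l<n. D k l * (X k k + X l l - 2 * X k l))
      = (\<Sum>k<n. \<Sum>l<n. D k l * X k k) + (\<Sum>k<n. \<Sum>l<n. D k l * X l l) - 2 * mat_inner n D X"
    unfolding mat_inner_def by (simp add: algebra_simps sum.distrib sum_subtractf sum_distrib_left)
  ultimately show ?thesis
    using diag_left diag_right by simp
qed

section \<open>Moving weight to the diagonal slows convergence\<close>

fun mat_pow_deriv ::
  "nat \<Rightarrow> (nat \<Rightarrow> nat \<Rightarrow> real) \<Rightarrow> (nat \<Rightarrow> nat \<Rightarrow> real) \<Rightarrow> nat \<Rightarrow> nat \<Rightarrow> nat \<Rightarrow> real" where
  "mat_pow_deriv n M D 0 = (\<lambda>i j. 0)"
| "mat_pow_deriv n M D (Suc t) =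
     (\<lambda>i j. mat_mult n (mat_pow_deriv n M D t) M i j + mat_mult n (mat_pow n M t) D i j)"

lemma has_real_derivative_mat_pow:
  "((\<lambda>s. mat_pow n (\<lambda>i j. A i j + s * D i j) t i j) has_real_derivative
      mat_pow_deriv n (\<lambda>i j. A i j + s * D i j) D t i j) (at s)"
proof (induction t arbitrary: j)
  case (Suc t)
  have entry: "((\<lambda>s. A k j + s * D k j) has_real_derivative D k j) (at s)" for k
    by (auto intro!: derivative_eq_intros)
  have "((\<lambda>s. \<Sum>k<n. mat_pow n (\<lambda>i j. A i j + s * D i j) t i k * (A k j + s * D k j))
      has_real_derivative
        (\<Sum>k<n. mat_pow_deriv n (\<lambda>i j. A i j + s * D i j) D t i k * (A k j + s * D k j)
          + D k j * mat_pow n (\<lambda>i j. A i j + s * D i j) t i k)) (at s)"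
    by (intro DERIV_sum DERIV_mult Suc.IH entry)
  then show ?case
    by (simp add: mat_mult_def sum.distrib mult.commute)
qed simp

lemma mat_inner_add_right:
  "mat_inner n X (\<lambda>i j. Y i j + Z i j) = mat_inner n X Y + mat_inner n X Z"
  unfolding mat_inner_def by (simp add: distrib_left sum.distrib)

text \<open>For t = 0 the exponent r + t - 1 is truncated, which is harmless as the factor is 0.\<close>
lemma mat_inner_mat_pow_deriv:
  assumes sym: "symmetric_net n M"
  shows "mat_inner n (mat_pow n M r) (mat_pow_deriv n M D t)
    = real t * mat_inner n (mat_pow n M (r + t - 1)) D"
proof (induction t arbitrary: r)
  case 0
  then show ?case by (simp add: mat_inner_def)
next
  case (Suc t)
  have "mat_inner n (mat_pow n M r) (mat_mult n (mat_pow_deriv n M D t) M)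
      = mat_inner n (mat_pow n M (Suc r)) (mat_pow_deriv n M D t)"
    using mat_inner_mult_right[OF sym] mat_inner_commute by (metis mat_pow.simps(2))
  also have "\<dots> = real t * mat_inner n (mat_pow n M (r + t)) D"
    using Suc.IH[of "Suc r"] by (cases t) auto
  finally have deriv_part: "mat_inner n (mat_pow n M r) (mat_mult n (mat_pow_deriv n M D t) M)
      = real t * mat_inner n (mat_pow n M (r + t)) D" .
  have "mat_inner n (mat_pow n M r) (mat_mult n (mat_pow n M t) D)
      = mat_inner n (mat_mult n (mat_pow n M t) (mat_pow n M r)) D"
    by (rule mat_inner_mult_left[OF symmetric_net_mat_pow[OF sym]])
  also have "\<dots> = mat_inner n (mat_pow n M (r + t)) D"
    by (rule mat_inner_cong) (simp add: mat_pow_add[symmetric] add.commute)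
  finally show ?case
    using deriv_part by (simp add: mat_inner_add_right algebra_simps)
qed

lemma has_real_derivative_mat_inner_self:
  assumes "\<And>i j. ((\<lambda>s. F s i j) has_real_derivative F' i j) (at s)"
  shows "((\<lambda>s. mat_inner n (F s) (F s)) has_real_derivative
    2 * mat_inner n (F s) F') (at s)"
proof -
  have "((\<lambda>s. mat_inner n (F s) (F s)) has_real_derivative
      (\<Sum>i<n. \<Sum>j<n. F' i j * F s i j + F' i j * F s i j)) (at s)"
    unfolding mat_inner_def by (intro DERIV_sum DERIV_mult assms)
  then show ?thesis
    by (simp add: mat_inner_def sum_distrib_left algebra_simps)
qed

definition lazy_symmetric_walk :: "nat \<Rightarrow> (nat \<Rightarrow> nat \<Rightarrow> real) \<Rightarrow> bool" where
  "lazy_symmetric_walk n P \<longleftrightarrow>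
     row_stochastic n P \<and> symmetric_net n P \<and> (\<forall>i<n. 1 / 2 \<le> P i i)"

lemma lazy_symmetric_walk_convex:
  assumes A: "lazy_symmetric_walk n A" and B: "lazy_symmetric_walk n B" and s: "0 \<le> s" "s \<le> 1"
  shows "lazy_symmetric_walk n (\<lambda>i j. (1 - s) * A i j + s * B i j)"
proof -
  have "0 \<le> (1 - s) * A i j + s * B i j" if "i < n" "j < n" for i j
    using A B s that by (simp add: lazy_symmetric_walk_def row_stochastic_def)
  moreover have "(1 - s) * A i j + s * B i j \<le> 1" if "i < n" "j < n" for i j
    using convex_bound_le[of "A i j" 1 "B i j" "1 - s" s] A B s that
    by (simp add: lazy_symmetric_walk_def row_stochastic_def)
  moreover have "(\<Sum>j<n. (1 - s) * A i j + s * B i j) = 1" if "i < n" for i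
    using A B that by (simp add: lazy_symmetric_walk_def row_stochastic_def sum.distrib
        flip: sum_distrib_left)
  moreover have "1 / 2 \<le> (1 - s) * A i i + s * B i i" if "i < n" for i
  proof -
    have "1 / 2 \<le> A i i" "1 / 2 \<le> B i i"
      using A B that by (simp_all add: lazy_symmetric_walk_def)
    then have "(1 - s) * (1 / 2) \<le> (1 - s) * A i i" "s * (1 / 2) \<le> s * B i i"
      using s by (intro mult_left_mono; simp)+
    from add_mono[OF this] show ?thesis by (simp add: field_simps)
  qed
  ultimately show ?thesis
    using A B by (auto simp: lazy_symmetric_walk_def row_stochastic_def symmetric_net_def)
qed

lemma lazy_symmetric_walk_mat_pow_entry_bound:
  assumes P: "lazy_symmetric_walk n P" and kl: "k < n" "l < n"
  shows "2 * mat_pow n P r k l \<le> mat_pow n P r k k + mat_pow n P r l l"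
proof -
  have sym: "symmetric_net n P" using P by (simp add: lazy_symmetric_walk_def)
  have "0 \<le> quad_form n P z" for z
    using P by (intro quad_form_diag_dominant_nonneg)
      (auto simp: lazy_symmetric_walk_def row_stochastic_def)
  then show ?thesis
    using quad_form_nonneg_entry_bound[OF symmetric_net_mat_pow[OF sym]
        quad_form_mat_pow_nonneg[OF sym] kl]
    by blast
qed

lemma frobenius_mat_pow_mono:
  assumes A: "lazy_symmetric_walk n A" and B: "lazy_symmetric_walk n B"
    and off_diag: "\<forall>i<n. \<forall>j<n. i \<noteq> j \<longrightarrow> B i j \<le> A i j"
  shows "mat_inner n (mat_pow n A t) (mat_pow n A t)
    \<le> mat_inner n (mat_pow n B t) (mat_pow n B t)"
proof -
  define D where "D i j = B i j - A i j" for i j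
  define C where "C s = (\<lambda>i j. A i j + s * D i j)" for s :: real
  define g where "g s = mat_inner n (mat_pow n (C s) t) (mat_pow n (C s) t)" for s
  have deriv: "(g has_real_derivative
      2 * mat_inner n (mat_pow n (C s) t) (mat_pow_deriv n (C s) D t)) (at s)" for s
    unfolding g_def C_def
    by (intro has_real_derivative_mat_inner_self has_real_derivative_mat_pow)
  have D_sym: "symmetric_net n D"
    using A B by (simp add: lazy_symmetric_walk_def symmetric_net_def D_def)
  have D_rows: "\<forall>k<n. (\<Sum>l<n. D k l) = 0"
    using A B by (simp add: lazy_symmetric_walk_def row_stochastic_def D_def sum_subtractf)
  have D_off_diag: "\<forall>k<n. \<forall>l<n. k \<noteq> l \<longrightarrow> D k l \<le> 0"
    using off_diag by (simp add: D_def)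
  have deriv_nonneg: "0 \<le> mat_inner n (mat_pow n (C s) t) (mat_pow_deriv n (C s) D t)"
    if "0 \<le> s" "s \<le> 1" for s
  proof -
    have "C s = (\<lambda>i j. (1 - s) * A i j + s * B i j)"
      by (auto simp: C_def D_def algebra_simps)
    then have C: "lazy_symmetric_walk n (C s)"
      using lazy_symmetric_walk_convex[OF A B that] by simp
    have "0 \<le> mat_inner n D (mat_pow n (C s) (t + t - 1))"
      using lazy_symmetric_walk_mat_pow_entry_bound[OF C]
      by (intro mat_inner_laplacian_nonneg[OF D_sym D_rows D_off_diag]) blast
    then show ?thesis
      using C by (simp add: mat_inner_mat_pow_deriv lazy_symmetric_walk_def mat_inner_commute)
  qed
  have "g 0 \<le> g 1"
  proof (rule DERIV_nonneg_imp_nondecreasing[of 0 1 g])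
    fix s :: real assume "0 \<le> s" "s \<le> 1"
    then show "\<exists>y. (g has_real_derivative y) (at s) \<and> 0 \<le> y"
      using deriv deriv_nonneg by fastforce
  qed simp
  moreover have "C 0 = A" "C 1 = B"
    by (auto simp: C_def D_def)
  ultimately show ?thesis
    by (simp add: g_def)
qed

section \<open>Convergence to the uniform distribution\<close>

lemma mat_pow_pos_of_path:
  assumes P: "row_stochastic n P" and path: "(i, j) \<in> (net_edges n P)\<^sup>+" and i: "i < n"
  shows "\<exists>L>0. 0 < mat_pow n P L i j"
  using path
proof (induction rule: trancl_induct)
  case (base j)
  then show ?case
    using i by (intro exI[of _ 1]) (auto simp: net_edges_def mat_mult_id_left)
next
  case (step j k)
  then obtain L where L: "L > 0" "0 < mat_pow n P L i j" by auto
  from step.hyps(2) have jk: "j < n" "k < n" "0 < P j k" by (auto simp: net_edges_def)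
  have "mat_pow n P L i j * P j k \<le> (\<Sum>l<n. mat_pow n P L i l * P l k)"
    using P row_stochastic_mat_pow[OF P, of L] i jk
    by (intro member_le_sum[where f = "\<lambda>l. mat_pow n P L i l * P l k"])
      (auto simp: row_stochastic_def)
  moreover have "0 < mat_pow n P L i j * P j k"
    using L jk by simp
  ultimately show ?case
    by (intro exI[of _ "Suc L"]) (auto simp: mat_mult_def)
qed

lemma mat_pow_pos_mono:
  assumes P: "row_stochastic n P" and diag: "\<forall>i<n. 0 < P i i" and ij: "i < n" "j < n"
    and pos: "0 < mat_pow n P L i j" and "L \<le> L'"
  shows "0 < mat_pow n P L' i j"
  using \<open>L \<le> L'\<close>
proof (induction L' rule: dec_induct)
  case (step m)
  have "mat_pow n P m i j * P j j \<le> (\<Sum>l<n. mat_pow n P m i l * P l j)"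
    using P row_stochastic_mat_pow[OF P, of m] ij
    by (intro member_le_sum[where f = "\<lambda>l. mat_pow n P m i l * P l j"])
      (auto simp: row_stochastic_def)
  moreover have "0 < mat_pow n P m i j * P j j"
    using step diag ij by simp
  ultimately show ?case
    by (simp add: mat_mult_def)
qed (rule pos)

lemma mat_pow_uniformly_pos:
  assumes n: "0 < n" and P: "row_stochastic n P" and diag: "\<forall>i<n. 0 < P i i"
    and conn: "strongly_connected n P"
  obtains K \<delta> where "K > 0" "\<delta> > 0" "\<forall>i<n. \<forall>j<n. \<delta> \<le> mat_pow n P K i j"
proof -
  have "\<forall>i<n. \<forall>j<n. \<exists>L>0. 0 < mat_pow n P L i j"
    using mat_pow_pos_of_path[OF P] conn by (auto simp: strongly_connected_def)
  then obtain L
    where L: "\<And>i j. i < n \<Longrightarrow> j < n \<Longrightarrow> L i j > 0 \<and> 0 < mat_pow n P (L i j) i j"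
    by metis
  define K where "K = (\<Sum>i<n. \<Sum>j<n. L i j)"
  have L_le_K: "L i j \<le> K" if "i < n" "j < n" for i j
  proof -
    have "L i j \<le> (\<Sum>j<n. L i j)"
      using that by (intro member_le_sum) auto
    also have "\<dots> \<le> K"
      unfolding K_def using that by (intro member_le_sum[where f = "\<lambda>i. \<Sum>j<n. L i j"]) auto
    finally show ?thesis .
  qed
  have pos: "0 < mat_pow n P K i j" if "i < n" "j < n" for i j
    using mat_pow_pos_mono[OF P diag that _ L_le_K[OF that]] L[OF that] by blast
  define S where "S = (\<lambda>(i, j). mat_pow n P K i j) ` ({..<n} \<times> {..<n})"
  have S: "finite S" "S \<noteq> {}"
    using n by (auto simp: S_def)
  show ?thesis
  proof
    show "K > 0"
      using L_le_K[OF n n] L[OF n n] by simp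
    show "Min S > 0"
      using Min_in[OF S] pos by (auto simp: S_def)
    show "\<forall>i<n. \<forall>j<n. Min S \<le> mat_pow n P K i j"
    proof (intro allI impI)
      fix i j assume "i < n" "j < n"
      then have "mat_pow n P K i j \<in> S" by (auto simp: S_def)
      then show "Min S \<le> mat_pow n P K i j" by (rule Min_le[OF S(1)])
    qed
  qed
qed

text \<open>
  As z sums to zero, subtracting delta from every entry of Q does not change z Q; what remains
  is nonnegative with all row and column sums 1 - n delta, and Cauchy-Schwarz applies columnwise.
\<close>
lemma doubly_stochastic_contraction:
  assumes lower: "\<forall>i<n. \<forall>j<n. \<delta> \<le> Q i j"
    and rows: "\<forall>i<n. (\<Sum>j<n. Q i j) = 1" and cols: "\<forall>j<n. (\<Sum>i<n. Q i j) = 1"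
    and z: "(\<Sum>k<n. z k) = 0"
  shows "(\<Sum>j<n. (\<Sum>k<n. z k * Q k j)\<^sup>2) \<le> (1 - real n * \<delta>)\<^sup>2 * (\<Sum>k<n. (z k)\<^sup>2)"
proof -
  define R where "R k j = Q k j - \<delta>" for k j
  define c where "c = 1 - real n * \<delta>"
  have R_nonneg: "0 \<le> R k j" if "k < n" "j < n" for k j
    using lower that by (simp add: R_def)
  have R_rows: "(\<Sum>j<n. R k j) = c" if "k < n" for k
    using rows that by (simp add: R_def sum_subtractf c_def)
  have R_cols: "(\<Sum>k<n. R k j) = c" if "j < n" for j
    using cols that by (simp add: R_def sum_subtractf c_def)
  have shift: "(\<Sum>k<n. z k * Q k j) = (\<Sum>k<n. z k * R k j)" for j
    using z by (simp add: R_def right_diff_distrib sum_subtractf flip: sum_distrib_right)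
  have column: "(\<Sum>k<n. z k * R k j)\<^sup>2 \<le> c * (\<Sum>k<n. R k j * (z k)\<^sup>2)" if j: "j < n" for j
  proof -
    have "(\<Sum>k<n. z k * R k j)\<^sup>2 = (\<Sum>k<n. sqrt (R k j) * (sqrt (R k j) * z k))\<^sup>2"
      using R_nonneg j by (intro arg_cong[where f = "\<lambda>x. x\<^sup>2"] sum.cong)
        (auto simp: mult.assoc[symmetric])
    also have "\<dots> \<le> (\<Sum>k<n. (sqrt (R k j))\<^sup>2) * (\<Sum>k<n. (sqrt (R k j) * z k)\<^sup>2)"
      by (rule Cauchy_Schwarz_ineq_sum)
    also have "\<dots> = c * (\<Sum>k<n. R k j * (z k)\<^sup>2)"
      using R_nonneg j R_cols by (simp add: power_mult_distrib)
    finally show ?thesis .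
  qed
  have "(\<Sum>j<n. (\<Sum>k<n. z k * Q k j)\<^sup>2) \<le> (\<Sum>j<n. c * (\<Sum>k<n. R k j * (z k)\<^sup>2))"
    using column by (intro sum_mono) (simp add: shift)
  also have "\<dots> = c * (\<Sum>k<n. (\<Sum>j<n. R k j) * (z k)\<^sup>2)"
    by (simp add: sum_distrib_left sum_distrib_right mult_ac) (rule sum.swap)
  also have "\<dots> = c\<^sup>2 * (\<Sum>k<n. (z k)\<^sup>2)"
    using R_rows by (simp add: power2_eq_square sum_distrib_left mult.assoc)
  finally show ?thesis
    by (simp add: c_def)
qed

lemma symmetric_walk_contraction:
  assumes n: "0 < n" and P: "row_stochastic n P" and sym: "symmetric_net n P"
    and diag: "\<forall>i<n. 0 < P i i" and conn: "strongly_connected n P"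
  obtains K c where "K > 0" "0 \<le> c" "c < 1"
    "\<And>z. (\<Sum>k<n. z k) = 0 \<Longrightarrow>
       (\<Sum>j<n. (\<Sum>k<n. z k * mat_pow n P K k j)\<^sup>2) \<le> c * (\<Sum>k<n. (z k)\<^sup>2)"
proof -
  obtain K \<delta> where K: "K > 0" "\<delta> > 0" "\<forall>i<n. \<forall>j<n. \<delta> \<le> mat_pow n P K i j"
    using mat_pow_uniformly_pos[OF n P diag conn] by blast
  have "(\<Sum>i<n. \<delta>) \<le> (\<Sum>i<n. mat_pow n P K i 0)"
    using K n by (intro sum_mono) auto
  then have "\<bar>1 - real n * \<delta>\<bar> < 1"
    using column_sum_mat_pow[OF P sym n] K n by simp
  then have "(1 - real n * \<delta>)\<^sup>2 < 1"
    by (simp add: abs_square_less_1)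
  moreover have "\<forall>i<n. (\<Sum>j<n. mat_pow n P K i j) = 1"
    using row_stochastic_mat_pow[OF P] by (simp add: row_stochastic_def)
  ultimately show ?thesis
    using K column_sum_mat_pow[OF P sym] doubly_stochastic_contraction[of n \<delta> "mat_pow n P K"]
    by (intro that[of K "(1 - real n * \<delta>)\<^sup>2"]) auto
qed

lemma is_stationary_mat_pow:
  assumes s: "is_stationary n P s" and j: "j < n"
  shows "(\<Sum>i<n. s i * mat_pow n P t i j) = s j"
  using j
proof (induction t arbitrary: j)
  case 0
  then show ?case
    by (simp add: if_distrib[of "\<lambda>c. _ * c"] cong: if_cong)
next
  case (Suc t)
  have "(\<Sum>i<n. s i * mat_pow n P (Suc t) i j)
      = (\<Sum>k<n. (\<Sum>i<n. s i * mat_pow n P t i k) * P k j)"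
    by (simp add: mat_mult_def sum_distrib_left sum_distrib_right mult.assoc) (rule sum.swap)
  also have "\<dots> = s j"
    using Suc s by (simp add: is_stationary_def)
  finally show ?case .
qed

lemma influence_symmetric_walk:
  assumes n: "0 < n" and P: "row_stochastic n P" and sym: "symmetric_net n P"
    and diag: "\<forall>i<n. 0 < P i i" and conn: "strongly_connected n P"
  shows "influence n P = (\<lambda>j. if j < n then 1 / real n else 0)"
  unfolding influence_def
proof (rule the_equality)
  have "(\<Sum>i<n. P i j / real n) = 1 / real n" if "j < n" for j
    using column_sum_mat_pow[OF P sym that, of 1] that
    by (simp add: mat_mult_id_left flip: sum_divide_distrib)
  then show "is_stationary n P (\<lambda>j. if j < n then 1 / real n else 0)"
    using n by (simp add: is_stationary_def)
next
  fix s assume s: "is_stationary n P s"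
  obtain K c where contract: "0 \<le> c" "c < 1"
    "\<And>z. (\<Sum>k<n. z k) = 0 \<Longrightarrow>
       (\<Sum>j<n. (\<Sum>k<n. z k * mat_pow n P K k j)\<^sup>2) \<le> c * (\<Sum>k<n. (z k)\<^sup>2)"
    using symmetric_walk_contraction[OF n P sym diag conn] by blast
  define z where "z k = s k - 1 / real n" for k
  have "(\<Sum>k<n. z k) = 0"
    using s n by (simp add: z_def sum_subtractf is_stationary_def)
  moreover have "(\<Sum>k<n. z k * mat_pow n P K k j) = z j" if "j < n" for j
    using is_stationary_mat_pow[OF s that] column_sum_mat_pow[OF P sym that]
    by (simp add: z_def left_diff_distrib sum_subtractf flip: sum_distrib_left sum_divide_distrib)
  ultimately have "(\<Sum>k<n. (z k)\<^sup>2) \<le> c * (\<Sum>k<n. (z k)\<^sup>2)"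
    using contract(3)[of z] by simp
  moreover have "0 \<le> (\<Sum>k<n. (z k)\<^sup>2)"
    by (simp add: sum_nonneg)
  ultimately have "(\<Sum>k<n. (z k)\<^sup>2) = 0"
    using mult_strict_right_mono[OF contract(2), of "\<Sum>k<n. (z k)\<^sup>2"] by linarith
  then have "\<forall>k<n. z k = 0"
    by (simp add: sum_nonneg_eq_0_iff)
  then show "s = (\<lambda>j. if j < n then 1 / real n else 0)"
    using s by (auto simp: z_def is_stationary_def)
qed

lemma sum_sq_dev_uniform_eq:
  assumes n: "0 < n" and P: "row_stochastic n P"
  shows "(\<Sum>i<n. \<Sum>j<n. (mat_pow n P t i j - 1 / real n)\<^sup>2)
    = mat_inner n (mat_pow n P t) (mat_pow n P t) - 1"
proof -
  have row: "(\<Sum>j<n. (mat_pow n P t i j - 1 / real n)\<^sup>2)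
      = (\<Sum>j<n. (mat_pow n P t i j)\<^sup>2) - 1 / real n" if i: "i < n" for i
  proof -
    have "(\<Sum>j<n. (mat_pow n P t i j - 1 / real n)\<^sup>2)
        = (\<Sum>j<n. (mat_pow n P t i j)\<^sup>2 - 2 / real n * mat_pow n P t i j + 1 / (real n)\<^sup>2)"
      by (intro sum.cong) (simp_all add: power2_diff power_divide)
    also have "\<dots> = (\<Sum>j<n. (mat_pow n P t i j)\<^sup>2) - 2 / real n * (\<Sum>j<n. mat_pow n P t i j)
        + real n / (real n)\<^sup>2"
      by (simp add: sum.distrib sum_subtractf sum_distrib_left)
    finally show ?thesis
      using row_stochastic_mat_pow[OF P, of t] i n
      by (simp add: row_stochastic_def power2_eq_square)
  qed
  then show ?thesis
    using n by (simp add: mat_inner_def sum_subtractf power2_eq_square)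
qed

lemma frobenius_mat_pow_converges:
  assumes n: "0 < n" and P: "row_stochastic n P" and sym: "symmetric_net n P"
    and diag: "\<forall>i<n. 0 < P i i" and conn: "strongly_connected n P" and e: "0 < e"
  shows "\<exists>t>0. mat_inner n (mat_pow n P t) (mat_pow n P t) - 1 < e"
proof -
  obtain K c where K: "K > 0" and c: "0 \<le> c" "c < 1" and contract:
    "\<And>z. (\<Sum>k<n. z k) = 0 \<Longrightarrow>
       (\<Sum>j<n. (\<Sum>k<n. z k * mat_pow n P K k j)\<^sup>2) \<le> c * (\<Sum>k<n. (z k)\<^sup>2)"
    using symmetric_walk_contraction[OF n P sym diag conn] by blast
  define dev where "dev t = (\<Sum>i<n. \<Sum>j<n. (mat_pow n P t i j - 1 / real n)\<^sup>2)" for t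
  have step: "dev (t + K) \<le> c * dev t" for t
  proof -
    have "(\<Sum>j<n. (mat_pow n P (t + K) i j - 1 / real n)\<^sup>2)
        \<le> c * (\<Sum>j<n. (mat_pow n P t i j - 1 / real n)\<^sup>2)" if i: "i < n" for i
    proof -
      define z where "z k = mat_pow n P t i k - 1 / real n" for k
      have "(\<Sum>k<n. z k) = 0"
        using row_stochastic_mat_pow[OF P, of t] i n by (simp add: z_def sum_subtractf row_stochastic_def)
      moreover have "(\<Sum>k<n. z k * mat_pow n P K k j) = mat_pow n P (t + K) i j - 1 / real n"
        if j: "j < n" for j
        using mat_pow_add[OF i j, of P t K] column_sum_mat_pow[OF P sym j]
        by (simp add: z_def mat_mult_def left_diff_distrib sum_subtractf
            flip: sum_distrib_left sum_divide_distrib)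
      ultimately show ?thesis
        using contract[of z] by (simp add: z_def)
    qed
    then have "dev (t + K) \<le> (\<Sum>i<n. c * (\<Sum>j<n. (mat_pow n P t i j - 1 / real n)\<^sup>2))"
      unfolding dev_def by (intro sum_mono) simp
    then show ?thesis
      by (simp add: dev_def sum_distrib_left)
  qed
  have decay: "dev (m * K) \<le> c ^ m * dev 0" for m
  proof (induction m)
    case (Suc m)
    have "dev (Suc m * K) \<le> c * dev (m * K)"
      using step[of "m * K"] by (simp add: add.commute)
    also have "\<dots> \<le> c * (c ^ m * dev 0)"
      using Suc c by (intro mult_left_mono) auto
    finally show ?case by simp
  qed simp
  have dev0: "0 \<le> dev 0"
    unfolding dev_def by (intro sum_nonneg) auto
  obtain m where m: "c ^ m < e / (dev 0 + 1)"
    using real_arch_pow_inv[of "e / (dev 0 + 1)" c] e dev0 c by auto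
  have "c ^ Suc m \<le> c ^ m"
    using c by (intro power_decreasing) auto
  then have "dev (Suc m * K) \<le> c ^ m * dev 0"
    using decay[of "Suc m"] mult_right_mono[OF _ dev0] by (meson order_trans)
  also have "\<dots> \<le> c ^ m * (dev 0 + 1)"
    using c by (intro mult_left_mono) auto
  also have "\<dots> < e"
    using m dev0 by (simp add: field_simps)
  finally show ?thesis
    using K sum_sq_dev_uniform_eq[OF n P] unfolding dev_def by (intro exI[of _ "Suc m * K"]) auto
qed

lemma conv_time_symmetric_walk:
  assumes n: "0 < n" and P: "row_stochastic n P" and sym: "symmetric_net n P"
    and diag: "\<forall>i<n. 0 < P i i" and conn: "strongly_connected n P"
  shows "conv_time n P eps
    = (LEAST t. 0 < t \<and> 1 / real n * (mat_inner n (mat_pow n P t) (mat_pow n P t) - 1) < eps)"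
proof -
  have "(\<Sum>i<n. \<Sum>j<n. (mat_pow n P t i j - influence n P j)\<^sup>2)
      = (\<Sum>i<n. \<Sum>j<n. (mat_pow n P t i j - 1 / real n)\<^sup>2)" for t
    unfolding influence_symmetric_walk[OF assms] by simp
  then show ?thesis
    unfolding conv_time_def sum_sq_dev_uniform_eq[OF n P] by simp
qed

lemma conv_time_mono:
  assumes n: "0 < n" and eps: "0 < eps"
    and P1: "lazy_symmetric_walk n P1" "strongly_connected n P1"
    and P2: "lazy_symmetric_walk n P2" "strongly_connected n P2"
    and frobenius_le: "\<And>t. mat_inner n (mat_pow n P1 t) (mat_pow n P1 t)
      \<le> mat_inner n (mat_pow n P2 t) (mat_pow n P2 t)"
  shows "conv_time n P1 eps \<le> conv_time n P2 eps"
proof -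
  have hyps: "row_stochastic n P" "symmetric_net n P" "\<forall>i<n. 0 < P i i"
    if "lazy_symmetric_walk n P" for P
    using that by (auto simp: lazy_symmetric_walk_def intro: less_le_trans[of 0 "1 / 2"])
  define S where "S P t \<longleftrightarrow>
      0 < t \<and> 1 / real n * (mat_inner n (mat_pow n P t) (mat_pow n P t) - 1) < eps" for P t
  obtain t0 where "S P2 t0"
    using frobenius_mat_pow_converges[OF n hyps[OF P2(1)] P2(2), of "real n * eps"] n eps
    by (auto simp: S_def field_simps)
  then have "S P2 (LEAST t. S P2 t)"
    by (rule LeastI)
  then have "S P1 (LEAST t. S P2 t)"
    using frobenius_le[of "LEAST t. S P2 t"] n by (auto simp: S_def field_simps)
  then have "(LEAST t. S P1 t) \<le> (LEAST t. S P2 t)"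
    by (rule Least_le)
  then show ?thesis
    using conv_time_symmetric_walk[OF n hyps[OF P1(1)] P1(2)]
      conv_time_symmetric_walk[OF n hyps[OF P2(1)] P2(2)]
    by (simp add: S_def)
qed

section \<open>Confirmation bias\<close>

lemma lazy_symmetric_walk_Tstar:
  assumes T: "lazy_symmetric_walk n T"
  shows "lazy_symmetric_walk n (Tstar n T x q)"
proof -
  define cut where "cut i j \<longleftrightarrow> j \<noteq> i \<and> 1 - q < \<bar>x i - x j\<bar>" for i j
  define moved where "moved i = (\<Sum>j<n. if cut i j then T i j else 0)" for i
  have T_nonneg: "0 \<le> T i j" if "i < n" "j < n" for i j
    using T that by (simp add: lazy_symmetric_walk_def row_stochastic_def)
  have moved_eq: "(\<Sum>k\<in>{k. k < n \<and> k \<noteq> i \<and> 1 - q < \<bar>x i - x k\<bar>}. T i k) = moved i" for i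
  proof -
    have "{k. k < n \<and> k \<noteq> i \<and> 1 - q < \<bar>x i - x k\<bar>} = {k \<in> {..<n}. cut i k}"
      by (auto simp: cut_def)
    then show ?thesis
      by (simp add: moved_def flip: sum.inter_filter)
  qed
  have entries: "Tstar n T x q i j
      = T i j + (if j = i then moved i else 0) - (if cut i j then T i j else 0)" for i j
    unfolding Tstar_def moved_eq by (simp add: cut_def)
  have moved_nonneg: "0 \<le> moved i" if "i < n" for i
    unfolding moved_def using T_nonneg that by (intro sum_nonneg) auto
  have "row_stochastic n (Tstar n T x q)"
  proof (rule row_stochastic_intro)
    fix i j assume "i < n" "j < n"
    then show "0 \<le> Tstar n T x q i j"
      using T_nonneg moved_nonneg by (auto simp: entries cut_def)
  next
    fix i assume "i < n"
    then show "(\<Sum>j<n. Tstar n T x q i j) = 1"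
      using T unfolding entries
      by (simp add: sum.distrib sum_subtractf lazy_symmetric_walk_def row_stochastic_def moved_def)
  qed
  moreover have "symmetric_net n (Tstar n T x q)"
    using T by (auto simp: lazy_symmetric_walk_def symmetric_net_def Tstar_def abs_minus_commute)
  moreover have "\<forall>i<n. 1 / 2 \<le> Tstar n T x q i i"
    using T moved_nonneg by (auto simp: entries cut_def lazy_symmetric_walk_def intro: add_increasing2)
  ultimately show ?thesis
    by (simp add: lazy_symmetric_walk_def)
qed

lemma Tstar_off_diag_antimono:
  assumes "q1 \<le> q2" "i \<noteq> j" "0 \<le> T i j"
  shows "Tstar n T x q2 i j \<le> Tstar n T x q1 i j"
  using assms by (auto simp: Tstar_def)

theorem theorem1:
  fixes n :: nat and T :: "nat \<Rightarrow> nat \<Rightarrow> real" and x :: "nat \<Rightarrow> real"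
    and eps q1 q2 :: real
  assumes "0 < n"
    and "row_stochastic n T"
    and "strongly_connected n T"
    and "aperiodic n T"
    and "symmetric_net n T"
    and "\<forall>i<n. T i i \<ge> 1 / 2"
    and "\<forall>i<n. 0 \<le> x i \<and> x i \<le> 1"
    and "0 < eps"
    and "0 \<le> q1" and "q1 \<le> q2" and "q2 \<le> 1"
    and "strongly_connected n (Tstar n T x q1)"
    and "strongly_connected n (Tstar n T x q2)"
  shows "conv_time n (Tstar n T x q1) eps \<le> conv_time n (Tstar n T x q2) eps"
proof -
  have T: "lazy_symmetric_walk n T"
    using assms(2,5,6) by (simp add: lazy_symmetric_walk_def)
  have walks: "lazy_symmetric_walk n (Tstar n T x q1)" "lazy_symmetric_walk n (Tstar n T x q2)"
    by (intro lazy_symmetric_walk_Tstar[OF T])+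
  have "\<forall>i<n. \<forall>j<n. i \<noteq> j \<longrightarrow> Tstar n T x q2 i j \<le> Tstar n T x q1 i j"
    using Tstar_off_diag_antimono[OF assms(10)] assms(2) by (simp add: row_stochastic_def)
  then have "mat_inner n (mat_pow n (Tstar n T x q1) t) (mat_pow n (Tstar n T x q1) t)
      \<le> mat_inner n (mat_pow n (Tstar n T x q2) t) (mat_pow n (Tstar n T x q2) t)" for t
    by (rule frobenius_mat_pow_mono[OF walks])
  then show ?thesis
    by (rule conv_time_mono[OF assms(1,8) walks(1) assms(12) walks(2) assms(13)])
qed

end
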